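(* Let $F$ be a CNF formula over variables $x_1,\dots,x_n$ with clauses $C_1,\dots,C_m$, each containing two or three literals. Let $H=(V,A)$ be the 1-2-directed hypergraph constructed from $F$ as described in the context. Then $H$ contains an acyclic path from the node $\{\alpha,\beta\}$ to the node $\{c_{m+1},\gamma\}$ if and only if $F$ has a satisfying truth assignment.
   Context: **Triples and arcs.** A rooted triple $pq|o$, with $p,q,o$ distinct leaf labels and unordered in $p,q$, corresponds to the hyperarc $\mathrm{arc}(pq|o)= \{p,q\}\to\{\{p,o\},\{q,o\}\}$. Thus hypergraph nodes are unordered pairs of leaves; we write $pq$ for $\{p,q\}$. **Hypergraph notions.** A hyperarc $u\to\{v,v'\}$ has tail $u$ and heads $\{v,v'\}$. A path from $u_0$ to $u_\ell$ is a sequence $(a_1,\dots,a_\ell)$ of distinct hyperarcs with $\mathrm{t}(a_1)=u_0$, $u_\ell\in\mathrm{h}(a_\ell)$, and $\mathrm{t}(a_{k+1})\in\mathrm{h}(a_k)$ for all $k$. It is acyclic if no $a_k$ has a head equal to $\mathrm{t}(a_{k'})$ for some $k'<k$. **Construction.** Use leaves - $x_i^j,\bar x_i^j,y_i^j,\bar y_i^j$ for $i\in[n]$, $j\in[m]$; - $b_i,b'_i$ for $i\in[n+1]$; - $c_j,d_j$ for $j\in[m]$; - $c_{m+1}$, and $\alpha,\beta,\gamma$. The triple set $R$ is the union of the following groups. (i) Positive side of the gadget for each $i\in[n]$: - $b_ib'_i|x_i^1$ and $b'_ix_i^1|y_i^1$; - $x_i^jy_i^j|x_i^{j+1}$ and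 $y_i^jx_i^{j+1}|y_i^{j+1}$ for $1\le j\le m-1$; - $x_i^my_i^m|b_{i+1}$ and $y_i^mb_{i+1}|b'_{i+1}$. (ii) Negative side of the gadget for each $i\in[n]$: - $b_ib'_i|\bar x_i^1$ and $b'_i\bar x_i^1|\bar y_i^1$; - $\bar x_i^j\bar y_i^j|\bar x_i^{j+1}$ and $\bar y_i^j\bar x_i^{j+1}|\bar y_i^{j+1}$ for $1\le j\le m-1$; - $\bar x_i^m\bar y_i^m|b_{i+1}$ and $\bar x_i^mb_{i+1}|b'_{i+1}$. (iii) For each clause $C_j$: - for each positive occurrence of $x_i$ in $C_j$, the triples $c_jd_j|x_i^j$, $c_jx_i^j|y_i^j$, $c_jy_i^j|c_{j+1}$; - for each negative occurrence of $x_i$ in $C_j$, the triples $c_jd_j|\bar x_i^j$, $c_j\bar x_i^j|\bar y_i^j$, $c_j\bar y_i^j|c_{j+1}$; - if $j<m$, the triple $c_jc_{j+1}|d_{j+1}$. (iv) Connecting triples: $\alpha\beta|b_1$, $\beta b_1|b'_1$, $b_{n+1}b'_{n+1}|c_1$, $b'_{n+1}c_1|d_1$, $c_mc_{m+1}|\gamma$. Then $A=\{\mathrm{arc}(t):t\in R\}$, and $V$ is the set of all leaf pairs occurring as a tail or head of an arc in $A$. *)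

theory Defs
  imports Main
begin

text \<open>Leaf labels of the construction (indices are 1-based as in the paper).\<close>
datatype leaf =
    X nat nat
  | XB nat nat
  | Y nat nat
  | YB nat nat
  | B nat
  | B' nat
  | Cc nat
  | D nat
  | Alpha | Beta | Gamma

text \<open>A rooted triple pq|o is encoded as (p, q, o).\<close>
type_synonym triple = "leaf \<times> leaf \<times> leaf"

text \<open>Hypergraph nodes are unordered pairs of leaves (two-element sets);
  a hyperarc is (tail, set of heads).\<close>
type_synonym node = "leaf set"
type_synonym hyperarc = "node \<times> node set"

definition arc :: "triple \<Rightarrow> hyperarc" where
  "arc t = (case t of (p, q, r) \<Rightarrow> ({p, q}, {{p, r}, {q, r}}))"

definition tl_of :: "hyperarc \<Rightarrow> node" where "tl_of a = fst a"
definition hd_of :: "hyperarc \<Rightarrow> node set" where "hd_of a = snd a"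

text \<open>A CNF formula: clauses C_1..C_m given by cl :: nat => literal set, where a
  literal is (i, True) for x_i and (i, False) for the negation of x_i.\<close>
type_synonym literal = "nat \<times> bool"

definition satisfies :: "(nat \<Rightarrow> bool) \<Rightarrow> nat \<Rightarrow> (nat \<Rightarrow> literal set) \<Rightarrow> bool" where
  "satisfies \<sigma> m cl \<longleftrightarrow> (\<forall>j\<in>{1..m}. \<exists>(i, s)\<in>cl j. \<sigma> i = s)"

definition R_pos :: "nat \<Rightarrow> nat \<Rightarrow> triple set" where
  "R_pos n m = (\<Union>i\<in>{1..n}.
      {(B i, B' i, X i 1), (B' i, X i 1, Y i 1)}
    \<union> (\<Union>j\<in>{1..m-1}. {(X i j, Y i j, X i (j+1)), (Y i j, X i (j+1), Y i (j+1))})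
    \<union> {(X i m, Y i m, B (i+1)), (Y i m, B (i+1), B' (i+1))})"

definition R_neg :: "nat \<Rightarrow> nat \<Rightarrow> triple set" where
  "R_neg n m = (\<Union>i\<in>{1..n}.
      {(B i, B' i, XB i 1), (B' i, XB i 1, YB i 1)}
    \<union> (\<Union>j\<in>{1..m-1}. {(XB i j, YB i j, XB i (j+1)), (YB i j, XB i (j+1), YB i (j+1))})
    \<union> {(XB i m, YB i m, B (i+1)), (XB i m, B (i+1), B' (i+1))})"

definition R_clause :: "nat \<Rightarrow> (nat \<Rightarrow> literal set) \<Rightarrow> triple set" where
  "R_clause m cl = (\<Union>j\<in>{1..m}.
      (\<Union>i\<in>{i. (i, True) \<in> cl j}.
         {(Cc j, D j, X i j), (Cc j, X i j, Y i j), (Cc j, Y i j, Cc (j+1))})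
    \<union> (\<Union>i\<in>{i. (i, False) \<in> cl j}.
         {(Cc j, D j, XB i j), (Cc j, XB i j, YB i j), (Cc j, YB i j, Cc (j+1))})
    \<union> (if j < m then {(Cc j, Cc (j+1), D (j+1))} else {}))"

definition R_conn :: "nat \<Rightarrow> nat \<Rightarrow> triple set" where
  "R_conn n m = {(Alpha, Beta, B 1), (Beta, B 1, B' 1), (B (n+1), B' (n+1), Cc 1),
                 (B' (n+1), Cc 1, D 1), (Cc m, Cc (m+1), Gamma)}"

definition R_of :: "nat \<Rightarrow> nat \<Rightarrow> (nat \<Rightarrow> literal set) \<Rightarrow> triple set" where
  "R_of n m cl = R_pos n m \<union> R_neg n m \<union> R_clause m cl \<union> R_conn n m"

definition A_of :: "nat \<Rightarrow> nat \<Rightarrow> (nat \<Rightarrow> literal set) \<Rightarrow> hyperarc set" where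
  "A_of n m cl = arc ` R_of n m cl"

definition V_of :: "nat \<Rightarrow> nat \<Rightarrow> (nat \<Rightarrow> literal set) \<Rightarrow> node set" where
  "V_of n m cl = {u. \<exists>a\<in>A_of n m cl. u = tl_of a \<or> u \<in> hd_of a}"

definition is_path :: "node set \<times> hyperarc set \<Rightarrow> node \<Rightarrow> node \<Rightarrow> hyperarc list \<Rightarrow> bool" where
  "is_path H u v as \<longleftrightarrow>
     as \<noteq> [] \<and> distinct as \<and> set as \<subseteq> snd H \<and>
     tl_of (hd as) = u \<and> v \<in> hd_of (last as) \<and>
     (\<forall>k. Suc k < length as \<longrightarrow> tl_of (as ! Suc k) \<in> hd_of (as ! k))"

definition acyclic_path :: "hyperarc list \<Rightarrow> bool" where
  "acyclic_path as \<longleftrightarrow>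
     (\<forall>k k'. k' < k \<and> k < length as \<longrightarrow> tl_of (as ! k') \<notin> hd_of (as ! k))"

end

theory Submission
  imports Defs
begin

(* A satisfying assignment \<sigma> yields a path that runs through gadget i along
   the side of the literal that \<sigma> makes false and then crosses each clause C_j by the detour
   c_j d_j, c_j x, c_j y, c_j c_{j+1} through the node {x, y} of a true literal.  All arcs of this
   path increase the potential "sum of the ranks of the two leaves" for a suitable rank of the
   leaves, so the path is acyclic.

   Conversely, an acyclic path can enter the clause region only through the arc
   b_{n+1} b'_{n+1} | c_1.  Before that it visits a node {x_i^j, y_i^j} or {bar x_i^j, bar y_i^j}
   for every cell (i, j), and never both sides of one gadget.  Afterwards each clause C_j is
   crossed by an arc c_j x | y of one of its literals, whose head {x, y} cannot be an earlier
   tail, so the gadget traversal used the other side.  Hence "x_i is true iff the path traverses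
   the negative side of gadget i" satisfies every clause. *)

lemma is_path_Cons:
  assumes "as \<noteq> []"
  shows "is_path H u v (a # as) \<longleftrightarrow>
    a \<in> snd H \<and> a \<notin> set as \<and> tl_of a = u \<and> tl_of (hd as) \<in> hd_of a \<and> is_path H (tl_of (hd as)) v as"
proof -
  have "(\<forall>k. Suc k < length (a # as) \<longrightarrow> tl_of ((a # as) ! Suc k) \<in> hd_of ((a # as) ! k)) \<longleftrightarrow>
      tl_of (hd as) \<in> hd_of a \<and> (\<forall>k. Suc k < length as \<longrightarrow> tl_of (as ! Suc k) \<in> hd_of (as ! k))"
    using assms by (auto simp: hd_conv_nth nth_Cons split: nat.splits)
  then show ?thesis
    using assms by (auto simp: is_path_def)
qed

lemma acyclic_path_Cons:
  "acyclic_path (a # as) \<longleftrightarrow> acyclic_path as \<and> (\<forall>b\<in>set as. tl_of a \<notin> hd_of b)"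
  unfolding acyclic_path_def
  by (auto simp: in_set_conv_nth nth_Cons split: nat.splits) fastforce+

definition triple_step :: "triple set \<Rightarrow> node \<Rightarrow> node \<Rightarrow> bool" where
  "triple_step T u w \<longleftrightarrow> (\<exists>t\<in>T. tl_of (arc t) = u \<and> w \<in> hd_of (arc t))"

definition rising :: "(leaf \<Rightarrow> nat) \<Rightarrow> triple \<Rightarrow> bool" where
  "rising rk t \<longleftrightarrow> (case t of (p, q, r) \<Rightarrow> rk p < rk r \<and> rk q < rk r)"

lemma rising_arc_potential:
  assumes "rising rk t" "h \<in> hd_of (arc t)"
  shows "(\<Sum>l\<in>tl_of (arc t). rk l) < (\<Sum>l\<in>h. rk l)"
proof -
  obtain p q r where t: "t = (p, q, r)" by (cases t)
  have "(\<Sum>l\<in>{p, q}. rk l) \<le> rk p + rk q"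
    by (cases "p = q") auto
  moreover have "p \<noteq> r" "q \<noteq> r" "rk p < rk r" "rk q < rk r"
    using assms(1) by (auto simp: rising_def t)
  ultimately show ?thesis
    using assms(2) by (auto simp: t arc_def tl_of_def hd_of_def)
qed

lemma rising_steps_acyclic_path:
  fixes rk :: "leaf \<Rightarrow> nat"
  assumes "(triple_step {t \<in> T. rising rk t})\<^sup>+\<^sup>+ u v"
  shows "\<exists>as. is_path (V, arc ` T) u v as \<and> acyclic_path as"
proof -
  define \<Phi> where "\<Phi> N = (\<Sum>l\<in>N. rk l)" for N
  \<comment> \<open>All tails of the path have potential at least that of its start, and every arc raises the
    potential; so a prepended arc is new and its tail is no later head.\<close>
  have "\<exists>as. is_path (V, arc ` T) u v as \<and> acyclic_path as \<and>
      (\<forall>a\<in>set as. \<Phi> u \<le> \<Phi> (tl_of a) \<and> (\<forall>h\<in>hd_of a. \<Phi> (tl_of a) < \<Phi> h))"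
    using assms
  proof (induction rule: converse_tranclp_induct)
    case (base u)
    then obtain t where "t \<in> T" "rising rk t" "tl_of (arc t) = u" "v \<in> hd_of (arc t)"
      by (auto simp: triple_step_def)
    then show ?case
      by (intro exI[of _ "[arc t]"])
        (auto simp: is_path_def acyclic_path_def \<Phi>_def rising_arc_potential)
  next
    case (step u w)
    then obtain as where as: "is_path (V, arc ` T) w v as" "acyclic_path as"
        and pot: "\<forall>a\<in>set as. \<Phi> w \<le> \<Phi> (tl_of a) \<and> (\<forall>h\<in>hd_of a. \<Phi> (tl_of a) < \<Phi> h)"
      by blast
    from step.hyps(1) obtain t
      where t: "t \<in> T" "rising rk t" "tl_of (arc t) = u" "w \<in> hd_of (arc t)"
      by (auto simp: triple_step_def)
    have uw: "\<Phi> u < \<Phi> w"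
      using t rising_arc_potential unfolding \<Phi>_def by blast
    have ne: "as \<noteq> []" and hd: "tl_of (hd as) = w"
      using as(1) by (auto simp: is_path_def)
    have "arc t \<notin> set as"
      using pot uw t(3) by fastforce
    moreover have "\<forall>b\<in>set as. u \<notin> hd_of b"
      using pot uw by fastforce
    moreover have "\<forall>h\<in>hd_of (arc t). \<Phi> u < \<Phi> h"
      using t rising_arc_potential unfolding \<Phi>_def by blast
    moreover have "\<forall>a\<in>set as. \<Phi> u \<le> \<Phi> (tl_of a)"
      using pot uw by fastforce
    ultimately show ?case
      using as pot t ne hd
      by (intro exI[of _ "arc t # as"]) (auto simp: is_path_Cons acyclic_path_Cons)
  qed
  then show ?thesis by blast
qed

lemma exists_leaving_step:
  assumes "P (f a)" "\<not> P (f b)" "a \<le> b"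
  shows "\<exists>k. a \<le> k \<and> k < b \<and> P (f k) \<and> \<not> P (f (Suc k))"
proof (rule ccontr)
  assume no_step: "\<nexists>k. a \<le> k \<and> k < b \<and> P (f k) \<and> \<not> P (f (Suc k))"
  from assms(3,1) have "P (f b)"
    by (induction b rule: dec_induct) (use no_step in auto)
  with assms(2) show False ..
qed

definition lit_x :: "bool \<Rightarrow> nat \<Rightarrow> nat \<Rightarrow> leaf" where
  "lit_x s i j = (if s then X i j else XB i j)"

definition lit_y :: "bool \<Rightarrow> nat \<Rightarrow> nat \<Rightarrow> leaf" where
  "lit_y s i j = (if s then Y i j else YB i j)"

lemma R_of_gadget_triples:
  assumes "1 \<le> i" "i \<le> n"
  shows "(B i, B' i, lit_x s i 1) \<in> R_of n m cl"
    and "(B' i, lit_x s i 1, lit_y s i 1) \<in> R_of n m cl"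
    and "1 \<le> j \<Longrightarrow> j < m \<Longrightarrow> (lit_x s i j, lit_y s i j, lit_x s i (Suc j)) \<in> R_of n m cl"
    and "1 \<le> j \<Longrightarrow> j < m \<Longrightarrow> (lit_y s i j, lit_x s i (Suc j), lit_y s i (Suc j)) \<in> R_of n m cl"
    and "(X i m, Y i m, B (Suc i)) \<in> R_of n m cl" "(Y i m, B (Suc i), B' (Suc i)) \<in> R_of n m cl"
    and "(XB i m, YB i m, B (Suc i)) \<in> R_of n m cl" "(XB i m, B (Suc i), B' (Suc i)) \<in> R_of n m cl"
  using assms unfolding R_of_def R_pos_def R_neg_def lit_x_def lit_y_def by (cases s; force)+

lemma R_of_clause_triples:
  assumes "1 \<le> j" "j \<le> m" "(i, s) \<in> cl j"
  shows "(Cc j, D j, lit_x s i j) \<in> R_of n m cl"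
    and "(Cc j, lit_x s i j, lit_y s i j) \<in> R_of n m cl"
    and "(Cc j, lit_y s i j, Cc (Suc j)) \<in> R_of n m cl"
  using assms unfolding R_of_def R_clause_def lit_x_def lit_y_def by (cases s; force)+

lemma R_of_clause_link: "1 \<le> j \<Longrightarrow> j < m \<Longrightarrow> (Cc j, Cc (Suc j), D (Suc j)) \<in> R_of n m cl"
  unfolding R_of_def R_clause_def by force

lemma R_conn_subset: "R_conn n m \<subseteq> R_of n m cl"
  by (simp add: R_of_def)

(* Gadget i is traversed along the side \<not> \<sigma> i, ranked between b_i and b_{i+1}; the side \<sigma> i is
   entered only by the detour of clause j, so its cell j is ranked between d_j and c_{j+1}. *)
fun rank :: "(nat \<Rightarrow> bool) \<Rightarrow> nat \<Rightarrow> nat \<Rightarrow> leaf \<Rightarrow> nat" where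
  "rank \<sigma> n m Alpha = 0"
| "rank \<sigma> n m Beta = 1"
| "rank \<sigma> n m (B i) = 2*(m+1)*i"
| "rank \<sigma> n m (B' i) = 2*(m+1)*i + 1"
| "rank \<sigma> n m (X i j) = (if \<sigma> i then 2*(m+1)*(n+1) + 4*j + 4 else 2*(m+1)*i + 2*j)"
| "rank \<sigma> n m (Y i j) = (if \<sigma> i then 2*(m+1)*(n+1) + 4*j + 5 else 2*(m+1)*i + 2*j + 1)"
| "rank \<sigma> n m (XB i j) = (if \<sigma> i then 2*(m+1)*i + 2*j else 2*(m+1)*(n+1) + 4*j + 4)"
| "rank \<sigma> n m (YB i j) = (if \<sigma> i then 2*(m+1)*i + 2*j + 1 else 2*(m+1)*(n+1) + 4*j + 5)"
| "rank \<sigma> n m (Cc j) = 2*(m+1)*(n+1) + 4*j + 2"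
| "rank \<sigma> n m (D j) = 2*(m+1)*(n+1) + 4*j + 3"
| "rank \<sigma> n m Gamma = 2*(m+1)*(n+1) + 4*m + 7"

lemma rank_lit [simp]:
  "rank \<sigma> n m (lit_x (\<not> \<sigma> i) i j) = 2*(m+1)*i + 2*j"
  "rank \<sigma> n m (lit_y (\<not> \<sigma> i) i j) = 2*(m+1)*i + 2*j + 1"
  "rank \<sigma> n m (lit_x (\<sigma> i) i j) = 2*(m+1)*(n+1) + 4*j + 4"
  "rank \<sigma> n m (lit_y (\<sigma> i) i j) = 2*(m+1)*(n+1) + 4*j + 5"
  by (simp_all add: lit_x_def lit_y_def)

context
  fixes \<sigma> :: "nat \<Rightarrow> bool" and n m :: nat and cl :: "nat \<Rightarrow> literal set"
begin

abbreviation rising_step :: "node \<Rightarrow> node \<Rightarrow> bool" where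
  "rising_step \<equiv> triple_step {t \<in> R_of n m cl. rising (rank \<sigma> n m) t}"

lemma rising_step_replace_snd:
  assumes "(p, q, r) \<in> R_of n m cl" "rank \<sigma> n m p < rank \<sigma> n m r" "rank \<sigma> n m q < rank \<sigma> n m r"
  shows "rising_step {p, q} {p, r}"
  using assms unfolding triple_step_def rising_def
  by (intro bexI[of _ "(p, q, r)"]) (auto simp: arc_def tl_of_def hd_of_def)

lemma rising_step_replace_fst:
  assumes "(p, q, r) \<in> R_of n m cl" "rank \<sigma> n m p < rank \<sigma> n m r" "rank \<sigma> n m q < rank \<sigma> n m r"
  shows "rising_step {p, q} {q, r}"
  using assms unfolding triple_step_def rising_def
  by (intro bexI[of _ "(p, q, r)"]) (auto simp: arc_def tl_of_def hd_of_def)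

lemma gadget_chain_steps:
  assumes "1 \<le> i" "i \<le> n" "1 \<le> j" "j \<le> m"
  shows "rising_step\<^sup>*\<^sup>* {lit_x (\<not> \<sigma> i) i 1, lit_y (\<not> \<sigma> i) i 1}
    {lit_x (\<not> \<sigma> i) i j, lit_y (\<not> \<sigma> i) i j}"
  using assms(3,4)
proof (induction j rule: dec_induct)
  case (step k)
  let ?s = "\<not> \<sigma> i"
  have "rising_step {lit_x ?s i k, lit_y ?s i k} {lit_y ?s i k, lit_x ?s i (Suc k)}"
    using step R_of_gadget_triples(3)[OF assms(1,2)] by (intro rising_step_replace_fst) auto
  moreover have
    "rising_step {lit_y ?s i k, lit_x ?s i (Suc k)} {lit_x ?s i (Suc k), lit_y ?s i (Suc k)}"
    using step R_of_gadget_triples(4)[OF assms(1,2)] by (intro rising_step_replace_fst) auto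
  moreover have "rising_step\<^sup>*\<^sup>* {lit_x ?s i 1, lit_y ?s i 1} {lit_x ?s i k, lit_y ?s i k}"
    using step by simp
  ultimately show ?case
    by (meson rtranclp.rtrancl_into_rtrancl)
qed simp

lemma gadget_steps:
  assumes "1 \<le> m" "1 \<le> i" "i \<le> n"
  shows "rising_step\<^sup>*\<^sup>* {B i, B' i} {B (Suc i), B' (Suc i)}"
proof -
  let ?s = "\<not> \<sigma> i"
  have "rising_step {B i, B' i} {B' i, lit_x ?s i 1}"
    using R_of_gadget_triples(1)[OF assms(2,3)] by (rule rising_step_replace_fst) simp_all
  moreover have "rising_step {B' i, lit_x ?s i 1} {lit_x ?s i 1, lit_y ?s i 1}"
    using R_of_gadget_triples(2)[OF assms(2,3)] by (rule rising_step_replace_fst) simp_all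
  moreover have "rising_step\<^sup>*\<^sup>* {lit_x ?s i 1, lit_y ?s i 1} {lit_x ?s i m, lit_y ?s i m}"
    using gadget_chain_steps assms by simp
  moreover have "rising_step\<^sup>*\<^sup>* {lit_x ?s i m, lit_y ?s i m} {B (Suc i), B' (Suc i)}"
  proof (cases "\<sigma> i")
    case True
    have "rising_step {XB i m, YB i m} {XB i m, B (Suc i)}"
      using R_of_gadget_triples(7)[OF assms(2,3)]
      by (rule rising_step_replace_snd) (simp_all add: True algebra_simps)
    moreover have "rising_step {XB i m, B (Suc i)} {B (Suc i), B' (Suc i)}"
      using R_of_gadget_triples(8)[OF assms(2,3)]
      by (rule rising_step_replace_fst) (simp_all add: True algebra_simps)
    ultimately show ?thesis
      using True by (simp add: lit_x_def lit_y_def)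
  next
    case False
    have "rising_step {X i m, Y i m} {Y i m, B (Suc i)}"
      using R_of_gadget_triples(5)[OF assms(2,3)]
      by (rule rising_step_replace_fst) (simp_all add: False algebra_simps)
    moreover have "rising_step {Y i m, B (Suc i)} {B (Suc i), B' (Suc i)}"
      using R_of_gadget_triples(6)[OF assms(2,3)]
      by (rule rising_step_replace_fst) (simp_all add: False algebra_simps)
    ultimately show ?thesis
      using False by (simp add: lit_x_def lit_y_def)
  qed
  ultimately show ?thesis
    by (meson converse_rtranclp_into_rtranclp rtranclp_trans)
qed

lemma gadgets_steps:
  assumes "1 \<le> m" "k \<le> n"
  shows "rising_step\<^sup>*\<^sup>* {B 1, B' 1} {B (Suc k), B' (Suc k)}"
  using assms(2)
proof (induction k)
  case (Suc k)
  then show ?case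
    using gadget_steps[OF assms(1), of "Suc k"] by (simp add: rtranclp_trans)
qed simp

lemma clause_steps:
  assumes "1 \<le> j" "j \<le> m" "(i, \<sigma> i) \<in> cl j"
  shows "rising_step\<^sup>*\<^sup>* {Cc j, D j} {Cc j, Cc (Suc j)}"
proof -
  have "rising_step {Cc j, D j} {Cc j, lit_x (\<sigma> i) i j}"
    using R_of_clause_triples(1)[of j m i "\<sigma> i" cl n, OF assms]
    by (rule rising_step_replace_snd) simp_all
  moreover have "rising_step {Cc j, lit_x (\<sigma> i) i j} {Cc j, lit_y (\<sigma> i) i j}"
    using R_of_clause_triples(2)[of j m i "\<sigma> i" cl n, OF assms]
    by (rule rising_step_replace_snd) simp_all
  moreover have "rising_step {Cc j, lit_y (\<sigma> i) i j} {Cc j, Cc (Suc j)}"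
    using R_of_clause_triples(3)[of j m i "\<sigma> i" cl n, OF assms]
    by (rule rising_step_replace_snd) simp_all
  ultimately show ?thesis
    by (meson converse_rtranclp_into_rtranclp r_into_rtranclp)
qed

lemma satisfied_literal:
  assumes "satisfies \<sigma> m cl" "1 \<le> j" "j \<le> m"
  obtains i where "(i, \<sigma> i) \<in> cl j"
  using assms unfolding satisfies_def by fastforce

lemma clauses_steps:
  assumes "satisfies \<sigma> m cl" "1 \<le> j" "j \<le> m"
  shows "rising_step\<^sup>*\<^sup>* {Cc 1, D 1} {Cc j, D j}"
  using assms(2,3)
proof (induction j rule: dec_induct)
  case (step k)
  have "1 \<le> k" "k \<le> m"
    using step by simp_all
  then obtain i where "(i, \<sigma> i) \<in> cl k"
    by (rule satisfied_literal[OF assms(1)])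
  then have "rising_step\<^sup>*\<^sup>* {Cc k, D k} {Cc k, Cc (Suc k)}"
    using clause_steps step by simp
  moreover have "rising_step {Cc k, Cc (Suc k)} {Cc (Suc k), D (Suc k)}"
    using R_of_clause_link[of k m n cl] step by (intro rising_step_replace_fst) simp_all
  ultimately show ?case
    using step by (meson rtranclp.rtrancl_into_rtrancl rtranclp_trans Suc_leD)
qed simp

lemma satisfying_steps:
  assumes "1 \<le> m" "satisfies \<sigma> m cl"
  shows "rising_step\<^sup>+\<^sup>+ {Alpha, Beta} {Cc (Suc m), Gamma}"
proof -
  have conn: "t \<in> R_of n m cl" if "t \<in> R_conn n m" for t
    using R_conn_subset that by blast
  obtain i where "(i, \<sigma> i) \<in> cl m"
    using satisfied_literal[OF assms(2) assms(1) order_refl] by blast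
  have "rising_step\<^sup>*\<^sup>* {Alpha, Beta} {B 1, B' 1}"
  proof -
    have "rising_step {Alpha, Beta} {Beta, B 1}" "rising_step {Beta, B 1} {B 1, B' 1}"
      by (rule rising_step_replace_fst; simp add: conn R_conn_def)+
    then show ?thesis by (meson converse_rtranclp_into_rtranclp r_into_rtranclp)
  qed
  moreover have "rising_step\<^sup>*\<^sup>* {B 1, B' 1} {B (Suc n), B' (Suc n)}"
    using gadgets_steps assms(1) by simp
  moreover have "rising_step\<^sup>*\<^sup>* {B (Suc n), B' (Suc n)} {Cc 1, D 1}"
  proof -
    have "rising_step {B (Suc n), B' (Suc n)} {B' (Suc n), Cc 1}"
      "rising_step {B' (Suc n), Cc 1} {Cc 1, D 1}"
      by (rule rising_step_replace_fst; simp add: conn R_conn_def algebra_simps)+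
    then show ?thesis by (meson converse_rtranclp_into_rtranclp r_into_rtranclp)
  qed
  moreover have "rising_step\<^sup>*\<^sup>* {Cc 1, D 1} {Cc m, Cc (Suc m)}"
    using clauses_steps[OF assms(2)] clause_steps \<open>(i, \<sigma> i) \<in> cl m\<close> assms(1)
    by (meson order_refl rtranclp_trans)
  moreover have "rising_step {Cc m, Cc (Suc m)} {Cc (Suc m), Gamma}"
    by (rule rising_step_replace_fst) (simp_all add: conn R_conn_def)
  ultimately show ?thesis
    by (meson rtranclp_into_tranclp1 rtranclp_trans)
qed

end

lemma R_of_cases:
  assumes "(p, q, r) \<in> R_of n m cl"
  obtains
    (pos) i where "1 \<le> i" "i \<le> n" "(p, q, r) \<in> {(B i, B' i, X i 1), (B' i, X i 1, Y i 1),
      (X i m, Y i m, B (i+1)), (Y i m, B (i+1), B' (i+1))}"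
  | (pos_chain) i j where "1 \<le> i" "i \<le> n" "1 \<le> j" "j < m"
      "(p, q, r) \<in> {(X i j, Y i j, X i (j+1)), (Y i j, X i (j+1), Y i (j+1))}"
  | (neg) i where "1 \<le> i" "i \<le> n" "(p, q, r) \<in> {(B i, B' i, XB i 1), (B' i, XB i 1, YB i 1),
      (XB i m, YB i m, B (i+1)), (XB i m, B (i+1), B' (i+1))}"
  | (neg_chain) i j where "1 \<le> i" "i \<le> n" "1 \<le> j" "j < m"
      "(p, q, r) \<in> {(XB i j, YB i j, XB i (j+1)), (YB i j, XB i (j+1), YB i (j+1))}"
  | (clause_pos) i j where "1 \<le> j" "j \<le> m" "(i, True) \<in> cl j"
      "(p, q, r) \<in> {(Cc j, D j, X i j), (Cc j, X i j, Y i j), (Cc j, Y i j, Cc (j+1))}"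
  | (clause_neg) i j where "1 \<le> j" "j \<le> m" "(i, False) \<in> cl j"
      "(p, q, r) \<in> {(Cc j, D j, XB i j), (Cc j, XB i j, YB i j), (Cc j, YB i j, Cc (j+1))}"
  | (clause_link) j where "1 \<le> j" "j < m" "(p, q, r) = (Cc j, Cc (j+1), D (j+1))"
  | (conn) "(p, q, r) \<in> R_conn n m"
  using assms unfolding R_of_def R_pos_def R_neg_def R_clause_def
  by (auto split: if_splits)

fun is_c :: "leaf \<Rightarrow> bool" where
  "is_c (Cc _) = True"
| "is_c _ = False"

fun beyond_cell :: "nat \<Rightarrow> nat \<Rightarrow> leaf \<Rightarrow> bool" where
  "beyond_cell i0 j0 (X i j) = (i0 < i \<or> i = i0 \<and> j0 \<le> j)"
| "beyond_cell i0 j0 (Y i j) = (i0 < i \<or> i = i0 \<and> j0 \<le> j)"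
| "beyond_cell i0 j0 (XB i j) = (i0 < i \<or> i = i0 \<and> j0 \<le> j)"
| "beyond_cell i0 j0 (YB i j) = (i0 < i \<or> i = i0 \<and> j0 \<le> j)"
| "beyond_cell i0 j0 (B i) = (i0 < i)"
| "beyond_cell i0 j0 (B' i) = (i0 < i)"
| "beyond_cell i0 j0 Alpha = False"
| "beyond_cell i0 j0 Beta = False"
| "beyond_cell i0 j0 _ = True"

fun beyond_side :: "bool \<Rightarrow> nat \<Rightarrow> leaf \<Rightarrow> bool" where
  "beyond_side s i0 (X i j) = (i0 < i \<or> i = i0 \<and> s)"
| "beyond_side s i0 (Y i j) = (i0 < i \<or> i = i0 \<and> s)"
| "beyond_side s i0 (XB i j) = (i0 < i \<or> i = i0 \<and> \<not> s)"
| "beyond_side s i0 (YB i j) = (i0 < i \<or> i = i0 \<and> \<not> s)"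
| "beyond_side s i0 (B i) = (i0 < i)"
| "beyond_side s i0 (B' i) = (i0 < i)"
| "beyond_side s i0 Alpha = False"
| "beyond_side s i0 Beta = False"
| "beyond_side s i0 _ = True"

fun beyond_clause :: "nat \<Rightarrow> leaf \<Rightarrow> bool" where
  "beyond_clause j (Cc j') = (j \<le> j')"
| "beyond_clause j (D j') = (j < j')"
| "beyond_clause j (X i j') = (j < j')"
| "beyond_clause j (XB i j') = (j < j')"
| "beyond_clause j (Y i j') = (j \<le> j')"
| "beyond_clause j (YB i j') = (j \<le> j')"
| "beyond_clause j Gamma = True"
| "beyond_clause j _ = False"

lemma R_of_Gamma:
  assumes "(p, q, r) \<in> R_of n m cl" "Gamma \<in> {p, q, r}"
  shows "(p, q, r) = (Cc m, Cc (m+1), Gamma)"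
  using assms(1) by (cases rule: R_of_cases) (use assms in \<open>auto simp: R_conn_def\<close>)

lemma R_of_enter_c:
  assumes "(p, q, r) \<in> R_of n m cl" "\<not> is_c p" "\<not> is_c q" "is_c r"
  shows "(p, q, r) = (B (n+1), B' (n+1), Cc 1)"
  using assms(1) by (cases rule: R_of_cases) (use assms in \<open>auto simp: R_conn_def\<close>)

lemma R_of_enter_cell:
  assumes "(p, q, r) \<in> R_of n m cl" "1 \<le> i" "1 \<le> j" "j \<le> m" "\<not> is_c p" "\<not> is_c q"
    and "\<not> (\<forall>l\<in>{p, q}. beyond_cell i j l)"
    and "w \<in> {{p, r}, {q, r}}" "\<forall>l\<in>w. beyond_cell i j l"
  shows "\<exists>s. w = {lit_x s i j, lit_y s i j}"
proof -
  have r: "beyond_cell i j r"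
    and w: "w = {p, r} \<and> beyond_cell i j p \<and> \<not> beyond_cell i j q
      \<or> w = {q, r} \<and> beyond_cell i j q \<and> \<not> beyond_cell i j p"
    using assms(7-9) by auto
  from assms(1) show ?thesis
  proof (cases rule: R_of_cases)
    case pos
    then show ?thesis using assms(2-6) w r
      by (intro exI[of _ True]) (auto simp: lit_x_def lit_y_def)
  next
    case pos_chain
    then show ?thesis using assms(2-6) w r
      by (intro exI[of _ True]) (auto simp: lit_x_def lit_y_def)
  next
    case neg
    then show ?thesis using assms(2-6) w r
      by (intro exI[of _ False]) (auto simp: lit_x_def lit_y_def)
  next
    case neg_chain
    then show ?thesis using assms(2-6) w r
      by (intro exI[of _ False]) (auto simp: lit_x_def lit_y_def)
  qed (use assms(2-6) w in \<open>auto simp: R_conn_def\<close>)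
qed

lemma R_of_side_closed:
  assumes "(p, q, r) \<in> R_of n m cl" "\<not> is_c p" "\<not> is_c q"
    and "beyond_side s i p" "beyond_side s i q"
  shows "beyond_side s i r"
  using assms(1) by (cases rule: R_of_cases) (use assms in \<open>auto simp: R_conn_def\<close>)

lemma R_of_enter_clause:
  assumes "(p, q, r) \<in> R_of n m cl" "1 \<le> j" "j \<le> m"
    and "\<not> ((\<forall>l\<in>{p, q}. beyond_clause j l) \<and> (\<exists>l\<in>{p, q}. is_c l))"
    and "w \<in> {{p, r}, {q, r}}" "(\<forall>l\<in>w. beyond_clause j l) \<and> (\<exists>l\<in>w. is_c l)"
  shows "\<exists>i s. (i, s) \<in> cl j \<and> (p, q, r) = (Cc j, lit_x s i j, lit_y s i j)"
  using assms(1)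
proof (cases rule: R_of_cases)
  case (clause_pos i j')
  then show ?thesis
    using assms by (intro exI[of _ i] exI[of _ True]) (auto simp: lit_x_def lit_y_def)
next
  case (clause_neg i j')
  then show ?thesis
    using assms by (intro exI[of _ i] exI[of _ False]) (auto simp: lit_x_def lit_y_def)
qed (use assms in \<open>auto simp: R_conn_def\<close>)

locale acyclic_run =
  fixes n m :: nat and cl :: "nat \<Rightarrow> literal set" and as :: "hyperarc list"
  assumes literals_in_range: "\<forall>j\<in>{1..m}. \<forall>(i, s)\<in>cl j. i \<in> {1..n}"
    and path: "is_path (V_of n m cl, A_of n m cl) {Alpha, Beta} {Cc (m+1), Gamma} as"
    and acyclic: "acyclic_path as"
begin

definition node :: "nat \<Rightarrow> node" where
  "node k = tl_of (as ! k)"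

lemma length_pos: "0 < length as"
  using path by (simp add: is_path_def)

lemma node_0: "node 0 = {Alpha, Beta}"
  using path by (auto simp: is_path_def node_def hd_conv_nth)

lemma arc_at:
  assumes "k < length as"
  obtains p q r where "(p, q, r) \<in> R_of n m cl" "as ! k = arc (p, q, r)" "node k = {p, q}"
    "hd_of (as ! k) = {{p, r}, {q, r}}"
proof -
  have "as ! k \<in> A_of n m cl"
    using path assms by (auto simp: is_path_def)
  then obtain p q r where "(p, q, r) \<in> R_of n m cl" "as ! k = arc (p, q, r)"
    unfolding A_of_def by auto
  then show ?thesis
    by (intro that) (simp_all add: node_def arc_def tl_of_def hd_of_def)
qed

lemma node_Suc: "Suc k < length as \<Longrightarrow> node (Suc k) \<in> hd_of (as ! k)"
  using path by (simp add: is_path_def node_def)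

lemma node_last: "node (length as - 1) = {Cc m, Cc (m+1)}"
proof -
  have "length as - 1 < length as"
    using length_pos by simp
  then obtain p q r where pqr: "(p, q, r) \<in> R_of n m cl" "node (length as - 1) = {p, q}"
      "hd_of (as ! (length as - 1)) = {{p, r}, {q, r}}"
    by (rule arc_at)
  moreover have "{Cc (m+1), Gamma} \<in> hd_of (as ! (length as - 1))"
    using path by (auto simp: is_path_def last_conv_nth)
  ultimately have "(p, q, r) = (Cc m, Cc (m+1), Gamma)"
    by (intro R_of_Gamma) (auto simp: doubleton_eq_iff)
  with pqr show ?thesis by simp
qed

lemma leaving_step:
  assumes "P (node a)" "\<not> P (node b)" "a \<le> b" "b < length as"
  obtains k p q r where "a \<le> k" "k < b" "(p, q, r) \<in> R_of n m cl" "as ! k = arc (p, q, r)"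
    "node k = {p, q}" "P {p, q}" "node (Suc k) \<in> {{p, r}, {q, r}}" "\<not> P (node (Suc k))"
proof -
  obtain k where k: "a \<le> k" "k < b" "P (node k)" "\<not> P (node (Suc k))"
    using exists_leaving_step[of P node a b] assms(1-3) by blast
  have "k < length as"
    using k(2) assms(4) by simp
  then obtain p q r where "(p, q, r) \<in> R_of n m cl" "as ! k = arc (p, q, r)" "node k = {p, q}"
      "hd_of (as ! k) = {{p, r}, {q, r}}"
    by (rule arc_at)
  moreover have "node (Suc k) \<in> hd_of (as ! k)"
    using node_Suc k(2) assms(4) by simp
  ultimately show ?thesis
    using k by (intro that[of k p q r]) simp_all
qed

definition entry :: nat where
  "entry = (LEAST k. \<exists>l\<in>node k. is_c l)"

lemma entry_less_length: "entry < length as"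
proof -
  have "entry \<le> length as - 1"
    unfolding entry_def by (rule Least_le) (simp only: node_last, simp)
  then show ?thesis
    using length_pos by linarith
qed

lemma c_free_before_entry: "k < entry \<Longrightarrow> l \<in> node k \<Longrightarrow> \<not> is_c l"
  unfolding entry_def using not_less_Least by blast

lemma node_before_entry: "0 < entry" "node (entry - 1) = {B (n+1), B' (n+1)}"
proof -
  have c_entry: "\<exists>l\<in>node entry. is_c l"
    unfolding entry_def by (rule LeastI[of _ "length as - 1"]) (simp only: node_last, simp)
  then show "0 < entry"
    using node_0 by (cases entry) auto
  then have "entry - 1 < length as" "Suc (entry - 1) = entry"
    using entry_less_length by simp_all
  then obtain p q r where pqr: "(p, q, r) \<in> R_of n m cl" "node (entry - 1) = {p, q}"
      "hd_of (as ! (entry - 1)) = {{p, r}, {q, r}}" "node entry \<in> hd_of (as ! (entry - 1))"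
    using arc_at node_Suc entry_less_length by metis
  moreover have pq: "\<not> is_c p" "\<not> is_c q"
    using c_free_before_entry[of "entry - 1"] \<open>0 < entry\<close> pqr(2) by auto
  moreover have "is_c r"
    using c_entry pqr(3,4) pq by auto
  ultimately show "node (entry - 1) = {B (n+1), B' (n+1)}"
    using R_of_enter_c by simp
qed

lemma visits_cell:
  assumes "1 \<le> i" "i \<le> n" "1 \<le> j" "j \<le> m"
  obtains a s where "a < entry" "node a = {lit_x s i j, lit_y s i j}"
proof -
  let ?beyond = "\<lambda>N. \<forall>l\<in>N. beyond_cell i j l"
  have "\<not> ?beyond (node 0)" "?beyond (node (entry - 1))"
    using node_0 node_before_entry assms(2) by auto
  then obtain k p q r where k: "k < entry - 1" "(p, q, r) \<in> R_of n m cl" "node k = {p, q}"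
      "\<not> ?beyond {p, q}" "node (Suc k) \<in> {{p, r}, {q, r}}" "?beyond (node (Suc k))"
    using entry_less_length by (elim leaving_step[of "\<lambda>N. \<not> ?beyond N" 0 "entry - 1"]) simp_all
  have "\<not> is_c p" "\<not> is_c q"
    using c_free_before_entry[of k] k(1,3) by auto
  then obtain s where "node (Suc k) = {lit_x s i j, lit_y s i j}"
    using R_of_enter_cell[OF k(2) assms(1,3,4) _ _ k(4,5)] k(6) by auto
  moreover have "Suc k < entry"
    using k(1) by simp
  ultimately show ?thesis
    using that by blast
qed

lemma beyond_side_persists:
  assumes "a \<le> b" "b < entry" "\<forall>l\<in>node a. beyond_side s i l"
  shows "\<forall>l\<in>node b. beyond_side s i l"
proof (rule ccontr)
  assume "\<not> (\<forall>l\<in>node b. beyond_side s i l)"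
  then obtain k p q r where k: "k < b" "(p, q, r) \<in> R_of n m cl" "node k = {p, q}"
      "\<forall>l\<in>{p, q}. beyond_side s i l" "node (Suc k) \<in> {{p, r}, {q, r}}"
      "\<not> (\<forall>l\<in>node (Suc k). beyond_side s i l)"
    using assms entry_less_length
    by (elim leaving_step[of "\<lambda>N. \<forall>l\<in>N. beyond_side s i l" a b]) simp_all
  have "\<not> is_c p" "\<not> is_c q"
    using c_free_before_entry[of k] k(1,3) assms(2) by auto
  then have "beyond_side s i r"
    using R_of_side_closed k(2,4) by auto
  then show False
    using k(4-6) by auto
qed

lemma side_unique:
  assumes "a < entry" "b < entry"
    and "node a = {lit_x s i j, lit_y s i j}" "node b = {lit_x t i j', lit_y t i j'}"
  shows "s = t"
proof -
  have side: "(\<forall>l\<in>{lit_x s' i j'', lit_y s' i j''}. beyond_side s'' i l) \<longleftrightarrow> s' = s''"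
    for s' s'' j''
    by (cases s'; cases s'') (auto simp: lit_x_def lit_y_def)
  consider "a \<le> b" | "b \<le> a"
    by linarith
  then show ?thesis
  proof cases
    case 1
    then show ?thesis
      using beyond_side_persists[OF 1 assms(2), of s i] side assms(3,4) by simp
  next
    case 2
    then show ?thesis
      using beyond_side_persists[OF 2 assms(1), of t i] side assms(3,4) by simp
  qed
qed

definition assignment :: "nat \<Rightarrow> bool" where
  "assignment i \<longleftrightarrow> (\<exists>a<entry. node a = {XB i 1, YB i 1})"

lemma assignment_avoids_visited_side:
  assumes "1 \<le> i" "i \<le> n" "1 \<le> j" "j \<le> m"
    and "a < entry" "node a = {lit_x t i j, lit_y t i j}"
  shows "assignment i \<longleftrightarrow> \<not> t"
proof -
  obtain a1 t1 where a1: "a1 < entry" "node a1 = {lit_x t1 i 1, lit_y t1 i 1}"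
    using visits_cell[of i 1] assms(1-4) by auto
  have "t1 = t"
    using side_unique[OF a1(1) assms(5) a1(2) assms(6)] .
  show ?thesis
  proof
    assume "assignment i"
    then obtain a' where "a' < entry" "node a' = {lit_x False i 1, lit_y False i 1}"
      by (auto simp: assignment_def lit_x_def lit_y_def)
    then show "\<not> t"
      using side_unique[of a' a False i 1 t j] assms(5,6) by simp
  next
    assume "\<not> t"
    then show "assignment i"
      using a1 \<open>t1 = t\<close> by (auto simp: assignment_def lit_x_def lit_y_def)
  qed
qed

lemma clause_crossed:
  assumes "1 \<le> j" "j \<le> m"
  obtains k i s where "entry \<le> k" "k < length as" "(i, s) \<in> cl j"
    "{lit_x s i j, lit_y s i j} \<in> hd_of (as ! k)"
proof -
  let ?reached = "\<lambda>N. (\<forall>l\<in>N. beyond_clause j l) \<and> (\<exists>l\<in>N. is_c l)"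
  have "\<not> ?reached (node 0)" "?reached (node (length as - 1))"
    using node_0 node_last assms(2) by auto
  then obtain k p q r where k: "k < length as - 1" "(p, q, r) \<in> R_of n m cl"
      "as ! k = arc (p, q, r)" "node k = {p, q}" "\<not> ?reached {p, q}"
      "node (Suc k) \<in> {{p, r}, {q, r}}" "?reached (node (Suc k))"
    using length_pos by (elim leaving_step[of "\<lambda>N. \<not> ?reached N" 0 "length as - 1"]) simp_all
  then obtain i s where lit: "(i, s) \<in> cl j" "(p, q, r) = (Cc j, lit_x s i j, lit_y s i j)"
    using R_of_enter_clause[OF k(2) assms k(5-7)] by blast
  then have "Cc j \<in> node k"
    using k(4) by simp
  then have "entry \<le> k"
    using c_free_before_entry[of k "Cc j"] by (meson is_c.simps(1) not_le)
  moreover have "{lit_x s i j, lit_y s i j} \<in> hd_of (as ! k)"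
    using k(3) lit(2) by (auto simp: arc_def hd_of_def)
  ultimately show ?thesis
    using that lit(1) k(1) by simp
qed

lemma satisfies_assignment: "satisfies assignment m cl"
  unfolding satisfies_def
proof
  fix j assume j: "j \<in> {1..m}"
  then have j1: "1 \<le> j" "j \<le> m"
    by auto
  then obtain k i s where k: "entry \<le> k" "k < length as" "(i, s) \<in> cl j"
      and head: "{lit_x s i j, lit_y s i j} \<in> hd_of (as ! k)"
    by (rule clause_crossed)
  have i: "1 \<le> i" "i \<le> n"
    using literals_in_range j k(3) by auto
  then obtain a t where a: "a < entry" "node a = {lit_x t i j, lit_y t i j}"
    using visits_cell j1 by blast
  have "node a \<notin> hd_of (as ! k)"
    using acyclic a(1) k(1,2) by (auto simp: acyclic_path_def node_def)
  then have "t \<noteq> s"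
    using a(2) head by (cases t; cases s) auto
  then have "assignment i = s"
    using assignment_avoids_visited_side[OF i j1 a] by auto
  then show "\<exists>(i', s')\<in>cl j. assignment i' = s'"
    using k(3) by auto
qed

end

theorem lemma1:
  fixes n m :: nat and cl :: "nat \<Rightarrow> literal set"
  assumes "m \<ge> 1"
    and "\<forall>j\<in>{1..m}. card (cl j) = 2 \<or> card (cl j) = 3"
    and "\<forall>j\<in>{1..m}. \<forall>(i, s)\<in>cl j. i \<in> {1..n}"
  shows "(\<exists>as. is_path (V_of n m cl, A_of n m cl) {Alpha, Beta} {Cc (m+1), Gamma} as
                \<and> acyclic_path as)
         \<longleftrightarrow> (\<exists>\<sigma>. satisfies \<sigma> m cl)"
proof
  assume "\<exists>as. is_path (V_of n m cl, A_of n m cl) {Alpha, Beta} {Cc (m+1), Gamma} as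
      \<and> acyclic_path as"
  then obtain as where "is_path (V_of n m cl, A_of n m cl) {Alpha, Beta} {Cc (m+1), Gamma} as"
      "acyclic_path as"
    by blast
  then interpret acyclic_run n m cl as
    using assms(3) by unfold_locales
  show "\<exists>\<sigma>. satisfies \<sigma> m cl"
    using satisfies_assignment by blast
next
  assume "\<exists>\<sigma>. satisfies \<sigma> m cl"
  then obtain \<sigma> where "satisfies \<sigma> m cl"
    by blast
  then show "\<exists>as. is_path (V_of n m cl, A_of n m cl) {Alpha, Beta} {Cc (m+1), Gamma} as
      \<and> acyclic_path as"
    using rising_steps_acyclic_path[OF satisfying_steps[OF assms(1)]] by (simp add: A_of_def)
qed

end
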